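(* Let $\lambda>0$, $Y\sim\mathrm{Poi}(\lambda)$, and let $g_1:\{0,1,2,\dots\}\to\mathbb R$ be defined by $g_1(0)=0$ and, for integers $w\ge1$, $$g_1(w)=\frac{e^\lambda w!}{\lambda^{w+1}}P(Y\le w)-\frac{e^\lambda (w-1)!}{\lambda^{w}}P(Y\le w-1).$$ Then $g_1$ is non-negative and non-decreasing, and for all integers $w\ge1$, $$g_1(w)\le\frac1\lambda+\frac{(w-1)!\,(w-\lambda)_+}{\lambda^{w+1}}e^\lambda ,$$ where $x_+=\max(x,0)$.
   Context: $\mathrm{Poi}(\lambda)$ is the Poisson distribution with mean $\lambda$. *)

theory Defs
  imports "HOL-Probability.Probability"
begin

definition poi_cdf :: "real \<Rightarrow> nat \<Rightarrow> real" where
  "poi_cdf lam w = measure_pmf.prob (poisson_pmf lam) {..w}"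

definition g1 :: "real \<Rightarrow> nat \<Rightarrow> real" where
  "g1 lam w = (if w = 0 then 0 else
      exp lam * fact w / lam ^ (w + 1) * poi_cdf lam w
      - exp lam * fact (w - 1) / lam ^ w * poi_cdf lam (w - 1))"

end

theory Submission
  imports Defs
begin

(* Put c = 1/lam and S n = sum_{k<=n} lam^k/k!, so that exp lam * P(Y <= n) = S n.
   The quantity  A n = n! S n / lam^(n+1)  satisfies  g1 (n+1) = A (n+1) - A n  and the
   recurrence  A (n+1) = (n+1)/lam * A n + 1/lam.  The recurrence gives at once
   g1 (n+1) = (n+1-lam)/lam * A n + 1/lam, whence the upper bound, using S n <= exp lam.
   For positivity and monotonicity we reverse the summation in A n, which yields
   A n = c * H 0 n  with the binomial sums  H m n = sum_{j<=n} (n choose j) (j+m)! c^j.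
   Pascal's rule gives  H m (n+1) = H m n + c * H (m+1) n, hence
   g1 (n+1) = c^2 H 1 n >= 0  and  g1 (n+2) - g1 (n+1) = c^3 H 2 n >= 0.
   The file first treats the binomial sums H in general, then the partial exponential
   sums and A, and finally derives the three claims about g1. *)

lemma pascal_sum:
  fixes f :: "nat \<Rightarrow> 'a::comm_semiring_1"
  shows "(\<Sum>j\<le>Suc n. of_nat (Suc n choose j) * f j) =
         (\<Sum>j\<le>n. of_nat (n choose j) * f j) + (\<Sum>j\<le>n. of_nat (n choose j) * f (Suc j))"
proof -
  have "(\<Sum>j\<le>Suc n. of_nat (Suc n choose j) * f j) =
        f 0 + (\<Sum>j\<le>n. of_nat (Suc n choose Suc j) * f (Suc j))"
    by (subst sum.atMost_Suc_shift) simp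
  also have "\<dots> = (f 0 + (\<Sum>j\<le>n. of_nat (n choose Suc j) * f (Suc j)))
                  + (\<Sum>j\<le>n. of_nat (n choose j) * f (Suc j))"
    by (simp add: sum.distrib algebra_simps)
  also have "f 0 + (\<Sum>j\<le>n. of_nat (n choose Suc j) * f (Suc j)) =
             (\<Sum>j\<le>Suc n. of_nat (n choose j) * f j)"
    by (subst sum.atMost_Suc_shift) simp
  also have "\<dots> = (\<Sum>j\<le>n. of_nat (n choose j) * f j)"
    by (simp add: binomial_eq_0)
  finally show ?thesis .
qed

text \<open>The sums \<open>binom_fact_sum c m n = \<Sum>j\<le>n. (n choose j) (j+m)! c^j\<close>; the scaled
  Poisson distribution function and its successive differences are all of this form.\<close>
definition binom_fact_sum :: "real \<Rightarrow> nat \<Rightarrow> nat \<Rightarrow> real" where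
  "binom_fact_sum c m n = (\<Sum>j\<le>n. real (n choose j) * (fact (j + m) * c ^ j))"

lemma binom_fact_sum_Suc:
  "binom_fact_sum c m (Suc n) = binom_fact_sum c m n + c * binom_fact_sum c (Suc m) n"
  unfolding binom_fact_sum_def
  by (subst pascal_sum) (simp add: sum_distrib_left algebra_simps)

lemma binom_fact_sum_nonneg: "c \<ge> 0 \<Longrightarrow> binom_fact_sum c m n \<ge> 0"
  unfolding binom_fact_sum_def by (intro sum_nonneg) simp

definition exp_partial :: "real \<Rightarrow> nat \<Rightarrow> real" where
  "exp_partial lam n = (\<Sum>k\<le>n. lam ^ k / fact k)"

lemma exp_poi_cdf: "lam > 0 \<Longrightarrow> exp lam * poi_cdf lam n = exp_partial lam n"
  unfolding poi_cdf_def exp_partial_def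
  by (simp add: measure_measure_pmf_finite sum_distrib_left exp_minus field_simps)

text \<open>Since a probability is at most one, the partial sums stay below \<open>exp lam\<close>.\<close>
lemma exp_partial_le_exp:
  assumes "lam > 0"
  shows "exp_partial lam n \<le> exp lam"
proof -
  have "poi_cdf lam n \<le> 1"
    unfolding poi_cdf_def by simp
  then have "exp lam * poi_cdf lam n \<le> exp lam"
    by (simp add: mult_left_le)
  then show ?thesis
    using exp_poi_cdf[OF assms] by simp
qed

definition scaled_cdf :: "real \<Rightarrow> nat \<Rightarrow> real" where
  "scaled_cdf lam n = fact n * exp_partial lam n / lam ^ (n + 1)"

lemma scaled_cdf_nonneg: "lam > 0 \<Longrightarrow> scaled_cdf lam n \<ge> 0"
  unfolding scaled_cdf_def exp_partial_def by (simp add: sum_nonneg)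

lemma g1_Suc_eq_diff:
  "lam > 0 \<Longrightarrow> g1 lam (Suc n) = scaled_cdf lam (Suc n) - scaled_cdf lam n"
  unfolding g1_def scaled_cdf_def using exp_poi_cdf[of lam]
  by (simp add: field_simps)

text \<open>First-order recurrence, obtained by splitting off the last term of the partial sum.\<close>
lemma scaled_cdf_Suc:
  assumes "lam > 0"
  shows "scaled_cdf lam (Suc n) = Suc n / lam * scaled_cdf lam n + 1 / lam"
proof -
  have "scaled_cdf lam (Suc n) =
        fact (Suc n) * (exp_partial lam n + lam ^ Suc n / fact (Suc n)) / lam ^ (n + 2)"
    unfolding scaled_cdf_def exp_partial_def by simp
  also have "\<dots> = Suc n * (fact n * exp_partial lam n) / lam ^ (n + 2) + 1 / lam"
    using assms by (simp add: distrib_left add_divide_distrib fact_Suc[of n] del: fact_Suc)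
  also have "\<dots> = Suc n / lam * scaled_cdf lam n + 1 / lam"
    unfolding scaled_cdf_def using assms by (simp add: field_simps)
  finally show ?thesis .
qed

text \<open>Reversing the order of summation, \<open>n!/k! lam^(k-n-1)\<close> becomes
  \<open>(n choose j) j! c^(j+1)\<close> with \<open>j = n - k\<close> and \<open>c = 1/lam\<close>.\<close>
lemma scaled_cdf_eq_binom_fact_sum:
  assumes lam: "lam > 0"
  shows "scaled_cdf lam n = (1/lam) * binom_fact_sum (1/lam) 0 n"
proof -
  have term_rev: "fact n * lam ^ (n - j) / fact (n - j) / lam ^ (n + 1) =
                  (1/lam) * (real (n choose j) * (fact (j + 0) * (1/lam) ^ j))"
    if j: "j \<le> n" for j
  proof -
    have "lam ^ (n + 1) = lam ^ (n - j) * lam ^ j * lam"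
      using j by (simp flip: power_add)
    moreover have "lam ^ j * lam ^ (n - j) = lam ^ n"
      using j by (simp flip: power_add)
    ultimately show ?thesis
      using lam j by (simp add: binomial_fact field_simps)
  qed
  have "scaled_cdf lam n = (\<Sum>k=0..n. fact n * lam ^ k / fact k / lam ^ (n + 1))"
    unfolding scaled_cdf_def exp_partial_def
    by (simp add: sum_distrib_left sum_divide_distrib atMost_atLeast0)
  also have "\<dots> = (\<Sum>j=0..n. fact n * lam ^ (n - j) / fact (n - j) / lam ^ (n + 1))"
    by (subst sum.atLeastAtMost_rev) simp
  also have "\<dots> = (\<Sum>j=0..n. (1/lam) * (real (n choose j) * (fact (j + 0) * (1/lam) ^ j)))"
    using term_rev by (intro sum.cong) auto
  also have "\<dots> = (1/lam) * binom_fact_sum (1/lam) 0 n"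
    unfolding binom_fact_sum_def by (simp add: sum_distrib_left atMost_atLeast0)
  finally show ?thesis .
qed

lemma g1_Suc_eq_binom_fact_sum:
  assumes "lam > 0"
  shows "g1 lam (Suc n) = (1/lam)^2 * binom_fact_sum (1/lam) 1 n"
  using g1_Suc_eq_diff[OF assms, of n] scaled_cdf_eq_binom_fact_sum[OF assms]
  by (simp add: binom_fact_sum_Suc power2_eq_square algebra_simps)

lemma g1_nonneg:
  assumes "lam > 0"
  shows "g1 lam w \<ge> 0"
proof (cases w)
  case 0
  then show ?thesis by (simp add: g1_def)
next
  case (Suc n)
  then show ?thesis
    using assms g1_Suc_eq_binom_fact_sum[OF assms] binom_fact_sum_nonneg[of "1/lam"] by simp
qed

text \<open>The increments of \<open>g1\<close> are again binomial sums with nonnegative terms.\<close>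
lemma g1_mono:
  assumes "lam > 0"
  shows "mono (g1 lam)"
proof (rule incseq_SucI)
  fix w
  show "g1 lam w \<le> g1 lam (Suc w)"
  proof (cases w)
    case 0
    then show ?thesis using g1_nonneg[OF assms, of 1] by (simp add: g1_def)
  next
    case (Suc n)
    have "g1 lam (Suc (Suc n)) = g1 lam (Suc n) + (1/lam)^3 * binom_fact_sum (1/lam) 2 n"
      by (simp add: g1_Suc_eq_binom_fact_sum[OF assms] binom_fact_sum_Suc
                    numeral_2_eq_2 numeral_3_eq_3 algebra_simps)
    moreover have "(1/lam)^3 * binom_fact_sum (1/lam) 2 n \<ge> 0"
      using assms binom_fact_sum_nonneg[of "1/lam"] by simp
    ultimately show ?thesis using Suc by simp
  qed
qed

text \<open>By the recurrence, \<open>g1 w = (w - lam)/lam * scaled_cdf lam (w-1) + 1/lam\<close>; bounding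
  the partial exponential sum by \<open>exp lam\<close> gives the upper estimate.\<close>
lemma g1_upper_bound:
  assumes lam: "lam > 0" and w: "w \<ge> 1"
  shows "g1 lam w \<le> 1 / lam + fact (w - 1) * max (real w - lam) 0 / lam ^ (w + 1) * exp lam"
proof -
  obtain n where n: "w = Suc n" using w by (cases w) auto
  let ?d = "max (real w - lam) 0"
  have "g1 lam w = (real w - lam) / lam * scaled_cdf lam n + 1 / lam"
    using g1_Suc_eq_diff[OF lam, of n] scaled_cdf_Suc[OF lam, of n] lam n
    by (simp add: field_simps)
  also have "(real w - lam) / lam * scaled_cdf lam n \<le> ?d / lam * scaled_cdf lam n"
    using lam scaled_cdf_nonneg[OF lam]
    by (intro mult_right_mono divide_right_mono) auto
  also have "\<dots> = fact n * ?d / lam ^ (w + 1) * exp_partial lam n"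
    unfolding scaled_cdf_def n by (simp add: field_simps)
  also have "\<dots> \<le> fact n * ?d / lam ^ (w + 1) * exp lam"
    using lam exp_partial_le_exp[OF lam, of n] by (intro mult_left_mono) auto
  finally show ?thesis
    using n by simp
qed

theorem lemma4p3:
  fixes lam :: real
  assumes "lam > 0"
  shows "(\<forall>w. g1 lam w \<ge> 0) \<and> mono (g1 lam) \<and>
         (\<forall>w::nat. w \<ge> 1 \<longrightarrow>
            g1 lam w \<le> 1 / lam + fact (w - 1) * max (real w - lam) 0 / lam ^ (w + 1) * exp lam)"
  using g1_nonneg[OF assms] g1_mono[OF assms] g1_upper_bound[OF assms] by blast

end
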